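(* Let $\lambda$ be a CW-labeling of a finite graded poset $P$ with $\hat0$. Then the posets $R_\lambda(P)$ and $Q_\lambda(P)$ are isomorphic.
   Context: C-labelings: a maximal chain is an unrefinable chain from $\hat0$ to a maximal element. A C-labeling assigns to each pair $(\mathbf m,e)$, $\mathbf m$ a maximal chain and $e$ a cover relation of $\mathbf m$, a label in a poset $\Lambda$, such that maximal chains coinciding along their bottom $d$ cover relations have equal labels there (so $\lambda(\mathbf c,x\lessdot y)$ is defined for saturated chains $\mathbf c$ from $\hat0$ containing $x\lessdot y$, or ending at $x$ and extended by $y$). A rooted interval $[x,y]_{\mathbf r}$ is an interval with a saturated chain $\mathbf r$ from $\hat0$ to $x$, a maximal chain $\mathbf c$ of $[x,y]$ being labeled as in $\mathbf r\cup\mathbf c$. Increasing = strictly increasing label word; ascent-free = no consecutive labels $a<b$. CR-labeling: each rooted interval has exactly one increasing maximal chain. Rank two switching property: for every maximal chain $\mathbf m:\hat0=m_0\lessdot\cdots\lessdot m_k$ and $i<k$ with an ascent at rank $i$ there is a unique $m_i'\ne m_i$ such that replacing $m_i$ by $m_i'$ gives a maximal chain with the same labels except that those at ranks $i,i+1$ are swapped, and $m_i'$ is the same for all maximal chains agreeing with $\mathbf m$ in $m_0,\dots,m_{i+1}$ (quadratic exchange $U_i$; identity when there is no ascent; also defined on saturated chains from $\hat0$). CW-labeling: CR-labeling with the rank two switching property such that in each rooted interval distinct ascent-free maximal chains have distinct label words. $Q_\lambda(P)$: $C(P)$ is the set of saturated chains from $\hat0$ ordered by inclusion; $\mathbf c_1\sim_\lambda\mathbf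 c_2$ iff they have the same top element $y$ and are connected by quadratic exchanges (forwards or backwards) among maximal chains of $[\hat0,y]$. $Q_\lambda(P)$ is the set of classes ordered by the transitive closure of: $X\le Y$ if some $\mathbf c\in X$, $\mathbf d\in Y$ have $\mathbf c\subseteq\mathbf d$. $\mathrm{sort}$: for a word $w$ over $\Lambda$, repeatedly replace an adjacent factor $w_iw_{i+1}$ with $w_i<w_{i+1}$ by $w_{i+1}w_i$; this yields a unique ascent-free word $\mathrm{sort}(w)$. $R_\lambda(P)$ is the poset whose elements are pairs $(x,w)$ with $x\in P$ and $w$ the word of labels of an ascent-free saturated chain $\mathbf c$ from $\hat0$ to $x$ (such $\mathbf c$ is determined by $w$), with cover relations $(x,w)\lessdot(y,u)$ whenever $x\lessdot y$ and $u=\mathrm{sort}(w\,\lambda(\mathbf c,x\lessdot y))$, where $\mathbf c$ is the chain determined by $w$ and juxtaposition denotes concatenation; the order is the reflexive-transitive closure of these covers. *)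

theory Defs
  imports Main
begin

text \<open>The poset is a carrier set P inside a type with a partial order. Chains are
lists of elements, listed from bottom to top.\<close>

definition cov :: "'a::order set \<Rightarrow> 'a \<Rightarrow> 'a \<Rightarrow> bool" where
  "cov P x y \<longleftrightarrow> x \<in> P \<and> y \<in> P \<and> x < y \<and> \<not> (\<exists>w\<in>P. x < w \<and> w < y)"

definition cover_chain :: "'a::order set \<Rightarrow> 'a list \<Rightarrow> bool" where
  "cover_chain P c \<longleftrightarrow> c \<noteq> [] \<and> set c \<subseteq> P \<and>
     (\<forall>i. Suc i < length c \<longrightarrow> cov P (c ! i) (c ! Suc i))"

definition sat_chain :: "'a::order set \<Rightarrow> 'a \<Rightarrow> 'a list \<Rightarrow> bool" where
  "sat_chain P z c \<longleftrightarrow> cover_chain P c \<and> hd c = z"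

definition max_chain :: "'a::order set \<Rightarrow> 'a \<Rightarrow> 'a list \<Rightarrow> bool" where
  "max_chain P z c \<longleftrightarrow> sat_chain P z c \<and> (\<forall>w\<in>P. \<not> last c < w)"

definition interval_chain :: "'a::order set \<Rightarrow> 'a \<Rightarrow> 'a \<Rightarrow> 'a list \<Rightarrow> bool" where
  "interval_chain P x y c \<longleftrightarrow> cover_chain P c \<and> hd c = x \<and> last c = y"

definition fin_graded_bot :: "'a::order set \<Rightarrow> 'a \<Rightarrow> bool" where
  "fin_graded_bot P z \<longleftrightarrow> finite P \<and> z \<in> P \<and> (\<forall>x\<in>P. z \<le> x) \<and>
     (\<forall>m m'. max_chain P z m \<longrightarrow> max_chain P z m' \<longrightarrow> length m = length m')"

text \<open>A labeling assigns to a maximal chain m and the index i of its cover relation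
  m!i \<lessdot> m!(i+1) a label lab m i in the poset of labels (a type of class order).\<close>

definition C_labeling :: "'a::order set \<Rightarrow> 'a \<Rightarrow> ('a list \<Rightarrow> nat \<Rightarrow> 'l::order) \<Rightarrow> bool" where
  "C_labeling P z lab \<longleftrightarrow> (\<forall>m m' d. max_chain P z m \<longrightarrow> max_chain P z m' \<longrightarrow>
     take (Suc d) m = take (Suc d) m' \<longrightarrow> (\<forall>i<d. lab m i = lab m' i))"

definition ext_chain :: "'a::order set \<Rightarrow> 'a \<Rightarrow> 'a list \<Rightarrow> 'a list" where
  "ext_chain P z c = (SOME m. max_chain P z m \<and> take (length c) m = c)"

definition word :: "'a::order set \<Rightarrow> 'a \<Rightarrow> ('a list \<Rightarrow> nat \<Rightarrow> 'l::order) \<Rightarrow> 'a list \<Rightarrow> 'l list" where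
  "word P z lab c = map (lab (ext_chain P z c)) [0..<length c - 1]"

definition ext_label :: "'a::order set \<Rightarrow> 'a \<Rightarrow> ('a list \<Rightarrow> nat \<Rightarrow> 'l::order) \<Rightarrow> 'a list \<Rightarrow> 'a \<Rightarrow> 'l" where
  "ext_label P z lab c y = lab (ext_chain P z (c @ [y])) (length c - 1)"

text \<open>label word of a maximal chain c of the rooted interval [last r, y]_r\<close>
definition rword :: "'a::order set \<Rightarrow> 'a \<Rightarrow> ('a list \<Rightarrow> nat \<Rightarrow> 'l::order) \<Rightarrow> 'a list \<Rightarrow> 'a list \<Rightarrow> 'l list" where
  "rword P z lab r c = drop (length r - 1) (word P z lab (r @ tl c))"

definition increasing :: "'l::order list \<Rightarrow> bool" where
  "increasing w \<longleftrightarrow> sorted_wrt (<) w"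

definition ascent_free :: "'l::order list \<Rightarrow> bool" where
  "ascent_free w \<longleftrightarrow> (\<forall>i. Suc i < length w \<longrightarrow> \<not> w ! i < w ! Suc i)"

definition CR_labeling :: "'a::order set \<Rightarrow> 'a \<Rightarrow> ('a list \<Rightarrow> nat \<Rightarrow> 'l::order) \<Rightarrow> bool" where
  "CR_labeling P z lab \<longleftrightarrow> C_labeling P z lab \<and>
     (\<forall>r y. sat_chain P z r \<longrightarrow> y \<in> P \<longrightarrow> last r \<le> y \<longrightarrow>
        (\<exists>!c. interval_chain P (last r) y c \<and> increasing (rword P z lab r c)))"

definition ascent_at :: "('a list \<Rightarrow> nat \<Rightarrow> 'l::order) \<Rightarrow> 'a list \<Rightarrow> nat \<Rightarrow> bool" where
  "ascent_at lab m i \<longleftrightarrow> 1 \<le> i \<and> Suc i < length m \<and> lab m (i - 1) < lab m i"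

definition switch_ok :: "'a::order set \<Rightarrow> 'a \<Rightarrow> ('a list \<Rightarrow> nat \<Rightarrow> 'l::order) \<Rightarrow> 'a list \<Rightarrow> nat \<Rightarrow> 'a \<Rightarrow> bool" where
  "switch_ok P z lab m i x \<longleftrightarrow> x \<noteq> m ! i \<and> max_chain P z (m[i := x]) \<and>
     lab (m[i := x]) (i - 1) = lab m i \<and> lab (m[i := x]) i = lab m (i - 1) \<and>
     (\<forall>j. Suc j < length m \<longrightarrow> j \<noteq> i - 1 \<longrightarrow> j \<noteq> i \<longrightarrow> lab (m[i := x]) j = lab m j)"

definition rank_two_switching :: "'a::order set \<Rightarrow> 'a \<Rightarrow> ('a list \<Rightarrow> nat \<Rightarrow> 'l::order) \<Rightarrow> bool" where
  "rank_two_switching P z lab \<longleftrightarrow>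
     (\<forall>m i. max_chain P z m \<longrightarrow> ascent_at lab m i \<longrightarrow>
        (\<exists>!x. switch_ok P z lab m i x) \<and>
        (\<forall>n. max_chain P z n \<longrightarrow> take (i + 2) n = take (i + 2) m \<longrightarrow>
            (THE x. switch_ok P z lab n i x) = (THE x. switch_ok P z lab m i x)))"

definition CW_labeling :: "'a::order set \<Rightarrow> 'a \<Rightarrow> ('a list \<Rightarrow> nat \<Rightarrow> 'l::order) \<Rightarrow> bool" where
  "CW_labeling P z lab \<longleftrightarrow> CR_labeling P z lab \<and> rank_two_switching P z lab \<and>
     (\<forall>r y c c'. sat_chain P z r \<longrightarrow> y \<in> P \<longrightarrow> last r \<le> y \<longrightarrow>
        interval_chain P (last r) y c \<longrightarrow> interval_chain P (last r) y c' \<longrightarrow>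
        ascent_free (rword P z lab r c) \<longrightarrow> ascent_free (rword P z lab r c') \<longrightarrow>
        c \<noteq> c' \<longrightarrow> rword P z lab r c \<noteq> rword P z lab r c')"

definition quad_ex :: "'a::order set \<Rightarrow> 'a \<Rightarrow> ('a list \<Rightarrow> nat \<Rightarrow> 'l::order) \<Rightarrow> nat \<Rightarrow> 'a list \<Rightarrow> 'a list" where
  "quad_ex P z lab i c = (let m = ext_chain P z c in
     if Suc i < length c \<and> ascent_at lab m i
     then c[i := (THE x. switch_ok P z lab m i x)] else c)"

definition quad_step :: "'a::order set \<Rightarrow> 'a \<Rightarrow> ('a list \<Rightarrow> nat \<Rightarrow> 'l::order) \<Rightarrow> 'a list \<Rightarrow> 'a list \<Rightarrow> bool" where
  "quad_step P z lab c d \<longleftrightarrow> sat_chain P z c \<and> sat_chain P z d \<and> last c = last d \<and>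
     ((\<exists>i. Suc i < length c \<and> d = quad_ex P z lab i c) \<or>
      (\<exists>i. Suc i < length d \<and> c = quad_ex P z lab i d))"

definition qsim :: "'a::order set \<Rightarrow> 'a \<Rightarrow> ('a list \<Rightarrow> nat \<Rightarrow> 'l::order) \<Rightarrow> 'a list \<Rightarrow> 'a list \<Rightarrow> bool" where
  "qsim P z lab c d \<longleftrightarrow> sat_chain P z c \<and> sat_chain P z d \<and> last c = last d \<and>
     (quad_step P z lab)\<^sup>*\<^sup>* c d"

definition Qset :: "'a::order set \<Rightarrow> 'a \<Rightarrow> ('a list \<Rightarrow> nat \<Rightarrow> 'l::order) \<Rightarrow> 'a list set set" where
  "Qset P z lab = {X. \<exists>c. sat_chain P z c \<and> X = {d. qsim P z lab c d}}"

definition Qle :: "'a::order set \<Rightarrow> 'a \<Rightarrow> ('a list \<Rightarrow> nat \<Rightarrow> 'l::order) \<Rightarrow> 'a list set \<Rightarrow> 'a list set \<Rightarrow> bool" where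
  "Qle P z lab = (\<lambda>X Y. X \<in> Qset P z lab \<and> Y \<in> Qset P z lab \<and>
      (\<exists>c\<in>X. \<exists>d\<in>Y. set c \<subseteq> set d))\<^sup>+\<^sup>+"

definition sort_step :: "'l::order list \<Rightarrow> 'l list \<Rightarrow> bool" where
  "sort_step w v \<longleftrightarrow> (\<exists>a b x y. w = a @ [x, y] @ b \<and> x < y \<and> v = a @ [y, x] @ b)"

definition sortw :: "'l::order list \<Rightarrow> 'l list" where
  "sortw w = (THE v. sort_step\<^sup>*\<^sup>* w v \<and> ascent_free v)"

definition Rset :: "'a::order set \<Rightarrow> 'a \<Rightarrow> ('a list \<Rightarrow> nat \<Rightarrow> 'l::order) \<Rightarrow> ('a \<times> 'l list) set" where
  "Rset P z lab = {(x, w). \<exists>c. sat_chain P z c \<and> last c = x \<and>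
       ascent_free (word P z lab c) \<and> w = word P z lab c}"

definition Rchain :: "'a::order set \<Rightarrow> 'a \<Rightarrow> ('a list \<Rightarrow> nat \<Rightarrow> 'l::order) \<Rightarrow> 'a \<Rightarrow> 'l list \<Rightarrow> 'a list" where
  "Rchain P z lab x w = (THE c. sat_chain P z c \<and> last c = x \<and> word P z lab c = w)"

definition Rcov :: "'a::order set \<Rightarrow> 'a \<Rightarrow> ('a list \<Rightarrow> nat \<Rightarrow> 'l::order) \<Rightarrow> 'a \<times> 'l list \<Rightarrow> 'a \<times> 'l list \<Rightarrow> bool" where
  "Rcov P z lab a b \<longleftrightarrow> a \<in> Rset P z lab \<and> b \<in> Rset P z lab \<and> cov P (fst a) (fst b) \<and>
     snd b = sortw (snd a @ [ext_label P z lab (Rchain P z lab (fst a) (snd a)) (fst b)])"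

definition Rle :: "'a::order set \<Rightarrow> 'a \<Rightarrow> ('a list \<Rightarrow> nat \<Rightarrow> 'l::order) \<Rightarrow> 'a \<times> 'l list \<Rightarrow> 'a \<times> 'l list \<Rightarrow> bool" where
  "Rle P z lab a b \<longleftrightarrow> a \<in> Rset P z lab \<and> b \<in> Rset P z lab \<and> (Rcov P z lab)\<^sup>*\<^sup>* a b"

end

theory Submission
  imports Defs
begin

text \<open>Every quadratic exchange at an ascent performs one sorting step on the label word of a
  saturated chain, so the sorted word is constant on each class of \<open>Q\<^sub>\<lambda>(P)\<close>. Exchanging at
  ascents until none is left shows that each class contains an ascent-free chain, and the
  CW condition on the rooted interval \<open>[z, y]\<close> makes it unique; so the classes correspond to the
  elements of \<open>R\<^sub>\<lambda>(P)\<close>. Exchanges commute with appending a cover, hence if \<open>c\<close> is ascent-free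
  with word \<open>w\<close> and top \<open>x\<close>, the ascent-free member of the class of \<open>c\<close> extended by \<open>y\<close> has word
  \<open>sort(w \<lambda>(c, x \<lessdot> y))\<close>: covers of \<open>R\<^sub>\<lambda>(P)\<close> are extensions by one element. Finally, containment
  of saturated chains from \<open>z\<close> means being a prefix, i.e. a sequence of such extensions.\<close>

section \<open>Sorting words by adjacent transpositions\<close>

definition swap_adj :: "nat \<Rightarrow> 'l list \<Rightarrow> 'l list" where
  "swap_adj i w = w[i := w ! Suc i, Suc i := w ! i]"

lemma sort_step_iff_swap_adj:
  "sort_step w v \<longleftrightarrow> (\<exists>i. Suc i < length w \<and> w ! i < w ! Suc i \<and> v = swap_adj i w)"
proof
  assume "sort_step w v"
  then obtain a b x y where "w = a @ [x, y] @ b" "x < y" "v = a @ [y, x] @ b"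
    unfolding sort_step_def by blast
  then show "\<exists>i. Suc i < length w \<and> w ! i < w ! Suc i \<and> v = swap_adj i w"
    by (intro exI[of _ "length a"]) (auto simp: swap_adj_def nth_append list_update_append)
next
  assume "\<exists>i. Suc i < length w \<and> w ! i < w ! Suc i \<and> v = swap_adj i w"
  then obtain i where i: "Suc i < length w" "w ! i < w ! Suc i" "v = swap_adj i w" by blast
  define a b where "a = take i w" and "b = drop (Suc (Suc i)) w"
  have w: "w = a @ [w ! i, w ! Suc i] @ b"
    using i(1) by (simp add: a_def b_def Cons_nth_drop_Suc id_take_nth_drop)
  have "length a = i" using i(1) by (simp add: a_def)
  then have "v = swap_adj (length a) (a @ [w ! i, w ! Suc i] @ b)"
    using i(3) w by simp
  then have "v = a @ [w ! Suc i, w ! i] @ b"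
    by (simp add: swap_adj_def list_update_append nth_append)
  then show "sort_step w v" unfolding sort_step_def using i(2) w by blast
qed

lemma ascent_free_iff_no_sort_step: "ascent_free w \<longleftrightarrow> (\<nexists>v. sort_step w v)"
  unfolding ascent_free_def sort_step_iff_swap_adj by blast

fun inversions :: "'l::order list \<Rightarrow> nat" where
  "inversions [] = 0"
| "inversions (x # xs) = length (filter (\<lambda>y. x < y) xs) + inversions xs"

lemma inversions_sort_step_less: "sort_step w v \<Longrightarrow> inversions v < inversions w"
proof -
  have "inversions (a @ [y, x] @ b) < inversions (a @ [x, y] @ b)" if "x < y" for a b and x y :: 'a
    using that by (induction a) auto
  then show "sort_step w v \<Longrightarrow> inversions v < inversions w"
    unfolding sort_step_def by blast
qed

lemma sort_steps_to_ascent_free: "\<exists>v. sort_step\<^sup>*\<^sup>* w v \<and> ascent_free v"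
proof (induction w rule: measure_induct_rule[of inversions])
  case (less w)
  show ?case
  proof (cases "ascent_free w")
    case False
    then obtain v where v: "sort_step w v" using ascent_free_iff_no_sort_step by blast
    then obtain u where "sort_step\<^sup>*\<^sup>* v u" "ascent_free u"
      using less inversions_sort_step_less by blast
    then show ?thesis using v by (meson converse_rtranclp_into_rtranclp)
  qed blast
qed

lemma swap_adj_sort_steps_join:
  assumes "Suc j < length w" "w ! i < w ! Suc i" "w ! j < w ! Suc j" "i < j"
  shows "\<exists>u. sort_step\<^sup>*\<^sup>* (swap_adj i w) u \<and> sort_step\<^sup>*\<^sup>* (swap_adj j w) u"
proof (cases "j = Suc i")
  case True
  \<comment> \<open>overlapping swaps: both sides reach the reversal of \<open>w ! i, w ! Suc i, w ! Suc (Suc i)\<close>\<close>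
  define u where "u = w[i := w ! Suc (Suc i), Suc (Suc i) := w ! i]"
  have ss: "Suc (Suc i) < length w" using assms True by simp
  have lt: "w ! i < w ! Suc (Suc i)" using assms True by (meson order.strict_trans)
  have "sort_step (swap_adj i w) (swap_adj (Suc i) (swap_adj i w))"
    unfolding sort_step_iff_swap_adj
    by (rule exI[of _ "Suc i"]) (use ss lt in \<open>auto simp: swap_adj_def nth_list_update\<close>)
  moreover have "sort_step (swap_adj (Suc i) (swap_adj i w)) u"
    unfolding sort_step_iff_swap_adj
    by (rule exI[of _ i])
      (use ss assms True in \<open>auto simp: swap_adj_def u_def nth_list_update list_eq_iff_nth_eq\<close>)
  moreover have "sort_step (swap_adj j w) (swap_adj i (swap_adj j w))"
    unfolding sort_step_iff_swap_adj
    by (rule exI[of _ i]) (use ss lt True in \<open>auto simp: swap_adj_def nth_list_update\<close>)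
  moreover have "sort_step (swap_adj i (swap_adj j w)) u"
    unfolding sort_step_iff_swap_adj
    by (rule exI[of _ "Suc i"])
      (use ss assms True in \<open>auto simp: swap_adj_def u_def nth_list_update list_eq_iff_nth_eq\<close>)
  ultimately show ?thesis by (meson rtranclp.rtrancl_into_rtrancl rtranclp.rtrancl_refl)
next
  case False
  then have ij: "Suc i < j" using assms by simp
  have "sort_step (swap_adj i w) (swap_adj j (swap_adj i w))"
    unfolding sort_step_iff_swap_adj
    by (rule exI[of _ j]) (use ij assms in \<open>auto simp: swap_adj_def nth_list_update\<close>)
  moreover have "sort_step (swap_adj j w) (swap_adj i (swap_adj j w))"
    unfolding sort_step_iff_swap_adj
    by (rule exI[of _ i]) (use ij assms in \<open>auto simp: swap_adj_def nth_list_update\<close>)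
  moreover have "swap_adj i (swap_adj j w) = swap_adj j (swap_adj i w)"
    using ij assms by (auto simp: swap_adj_def nth_list_update list_eq_iff_nth_eq)
  ultimately show ?thesis by (metis r_into_rtranclp)
qed

lemma sort_step_local_confluent:
  assumes "sort_step w v1" "sort_step w v2"
  shows "\<exists>u. sort_step\<^sup>*\<^sup>* v1 u \<and> sort_step\<^sup>*\<^sup>* v2 u"
proof -
  obtain i where i: "Suc i < length w" "w ! i < w ! Suc i" "v1 = swap_adj i w"
    using assms(1) sort_step_iff_swap_adj by blast
  obtain j where j: "Suc j < length w" "w ! j < w ! Suc j" "v2 = swap_adj j w"
    using assms(2) sort_step_iff_swap_adj by blast
  consider "i = j" | "i < j" | "j < i" by linarith
  then show ?thesis
    by cases (use i j swap_adj_sort_steps_join[of j w i] swap_adj_sort_steps_join[of i w j] in auto)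
qed

lemma ascent_free_normal_form_unique:
  "sort_step\<^sup>*\<^sup>* w v1 \<Longrightarrow> sort_step\<^sup>*\<^sup>* w v2 \<Longrightarrow> ascent_free v1 \<Longrightarrow> ascent_free v2 \<Longrightarrow> v1 = v2"
proof (induction w arbitrary: v1 v2 rule: measure_induct_rule[of inversions])
  case (less w)
  show ?case
  proof (cases "ascent_free w")
    case True
    then have "\<And>v. sort_step\<^sup>*\<^sup>* w v \<Longrightarrow> v = w"
      using ascent_free_iff_no_sort_step by (metis converse_rtranclpE)
    then show ?thesis using less.prems by metis
  next
    case False
    from less.prems(1) obtain w1 where w1: "sort_step w w1" "sort_step\<^sup>*\<^sup>* w1 v1"
      using False less.prems(3) by (metis converse_rtranclpE)
    from less.prems(2) obtain w2 where w2: "sort_step w w2" "sort_step\<^sup>*\<^sup>* w2 v2"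
      using False less.prems(4) by (metis converse_rtranclpE)
    obtain u where u: "sort_step\<^sup>*\<^sup>* w1 u" "sort_step\<^sup>*\<^sup>* w2 u"
      using sort_step_local_confluent[OF w1(1) w2(1)] by blast
    obtain n where n: "sort_step\<^sup>*\<^sup>* u n" "ascent_free n" using sort_steps_to_ascent_free by blast
    have "v1 = n" "v2 = n"
      using less.IH[of w1 v1 n] less.IH[of w2 v2 n] inversions_sort_step_less w1 w2 u n less.prems
      by (meson rtranclp_trans)+
    then show ?thesis by simp
  qed
qed

lemma sortw_eqI: "sort_step\<^sup>*\<^sup>* w v \<Longrightarrow> ascent_free v \<Longrightarrow> sortw w = v"
  unfolding sortw_def by (rule the_equality) (auto intro: ascent_free_normal_form_unique)

lemma sort_steps_sortw: "sort_step\<^sup>*\<^sup>* w (sortw w)"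
  and ascent_free_sortw: "ascent_free (sortw w)"
  using sort_steps_to_ascent_free[of w] sortw_eqI by metis+

lemma sortw_ascent_free: "ascent_free w \<Longrightarrow> sortw w = w"
  by (simp add: sortw_eqI)

lemma sortw_sort_steps_eq: "sort_step\<^sup>*\<^sup>* w v \<Longrightarrow> sortw w = sortw v"
  using sort_steps_sortw[of v] ascent_free_sortw[of v] sortw_eqI by (metis rtranclp_trans)

section \<open>Saturated chains\<close>

lemma cover_chain_take: "cover_chain P c \<Longrightarrow> 0 < k \<Longrightarrow> cover_chain P (take k c)"
  unfolding cover_chain_def by (auto dest: in_set_takeD)

lemma cover_chain_snoc_iff:
  assumes "cover_chain P c"
  shows "cover_chain P (c @ [y]) \<longleftrightarrow> cov P (last c) y"
proof
  assume h: "cover_chain P (c @ [y])"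
  have "c \<noteq> []" using assms cover_chain_def by blast
  then have "Suc (length c - 1) < length (c @ [y])" by simp
  then have "cov P ((c @ [y]) ! (length c - 1)) ((c @ [y]) ! Suc (length c - 1))"
    using h cover_chain_def by blast
  then show "cov P (last c) y" using \<open>c \<noteq> []\<close> by (simp add: nth_append last_conv_nth)
next
  assume h: "cov P (last c) y"
  have ne: "c \<noteq> []" using assms cover_chain_def by blast
  have "y \<in> P" using h cov_def by blast
  moreover have "cov P ((c @ [y]) ! i) ((c @ [y]) ! Suc i)" if "Suc i < length (c @ [y])" for i
  proof (cases "Suc i < length c")
    case True then show ?thesis using assms cover_chain_def by (auto simp: nth_append)
  next
    case False
    then have "i = length c - 1" using that by simp
    then show ?thesis using h ne by (simp add: nth_append last_conv_nth)
  qed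
  ultimately show "cover_chain P (c @ [y])" using assms unfolding cover_chain_def by auto
qed

lemma cover_chain_less: "cover_chain P c \<Longrightarrow> i < j \<Longrightarrow> j < length c \<Longrightarrow> c ! i < c ! j"
proof (induction j)
  case (Suc j)
  have "c ! j < c ! Suc j" using Suc.prems unfolding cover_chain_def cov_def by blast
  then show ?case using Suc by (cases "i = j") auto
qed simp

lemma cover_chain_le: "cover_chain P c \<Longrightarrow> i \<le> j \<Longrightarrow> j < length c \<Longrightarrow> c ! i \<le> c ! j"
  using cover_chain_less[of P c i j] by (cases "i = j") auto

lemma cover_chain_distinct: "cover_chain P c \<Longrightarrow> distinct c"
  unfolding distinct_conv_nth by (metis cover_chain_less linorder_neqE_nat order_less_irrefl)

text \<open>Inductively, the next element of the smaller chain covers the current one in the bigger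
  chain as well, so it is the next element there.\<close>

lemma cover_chain_subset_imp_prefix:
  assumes c: "cover_chain P c" and d: "cover_chain P d" and h: "hd c = hd d"
    and s: "set c \<subseteq> set d"
  shows "\<exists>e. d = c @ e"
proof -
  have ne: "c \<noteq> []" "d \<noteq> []" using c d cover_chain_def by auto
  have key: "k < length d \<and> c ! k = d ! k" if "k < length c" for k
    using that
  proof (induction k)
    case 0 then show ?case using ne h by (simp add: hd_conv_nth)
  next
    case (Suc k)
    then have IH: "k < length d" "c ! k = d ! k" by auto
    have cv: "cov P (c ! k) (c ! Suc k)" using c Suc.prems cover_chain_def by blast
    obtain j where j: "j < length d" "d ! j = c ! Suc k"
      using s Suc.prems by (metis in_mono in_set_conv_nth nth_mem)
    have "k < j"
    proof (rule ccontr)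
      assume "\<not> k < j"
      then have "d ! j \<le> d ! k" using cover_chain_le[OF d] IH by simp
      then show False using cv j IH unfolding cov_def by (metis order.strict_trans2 order_less_irrefl)
    qed
    have "j = Suc k"
    proof (rule ccontr)
      assume "j \<noteq> Suc k"
      then have "Suc k < j" using \<open>k < j\<close> by simp
      then have "c ! k < d ! Suc k" "d ! Suc k < c ! Suc k" "d ! Suc k \<in> P"
        using cover_chain_less[OF d, of "Suc k" j] cover_chain_less[OF d, of k "Suc k"] j IH d
        unfolding cover_chain_def by auto
      then show False using cv unfolding cov_def by blast
    qed
    then show ?case using j by simp
  qed
  then have "length c \<le> length d" using ne by (metis Suc_pred length_greater_0_conv lessI Suc_leI)
  moreover have "take (length c) d = c"
    using key calculation by (simp add: list_eq_iff_nth_eq)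
  ultimately show ?thesis by (metis append_take_drop_id)
qed

lemma sat_chain_nonempty: "sat_chain P z c \<Longrightarrow> c \<noteq> []"
  unfolding sat_chain_def cover_chain_def by simp

lemma sat_chain_last_mem: "sat_chain P z c \<Longrightarrow> last c \<in> P"
  unfolding sat_chain_def cover_chain_def by auto

lemma sat_chain_take: "sat_chain P z c \<Longrightarrow> 0 < k \<Longrightarrow> sat_chain P z (take k c)"
  unfolding sat_chain_def using cover_chain_take[of P c k] by (simp add: cover_chain_def)

lemma sat_chain_snoc_iff: "sat_chain P z c \<Longrightarrow> sat_chain P z (c @ [y]) \<longleftrightarrow> cov P (last c) y"
  unfolding sat_chain_def using cover_chain_snoc_iff[of P c y] by (auto simp: cover_chain_def)

lemma sat_chain_extends_to_max_chain:
  assumes "finite P" and "sat_chain P z c"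
  shows "\<exists>m. max_chain P z m \<and> take (length c) m = c"
  using assms(2)
proof (induction "card P - length c" arbitrary: c rule: less_induct)
  case less
  show ?case
  proof (cases "\<exists>w\<in>P. last c < w")
    case True
    then have "finite {w\<in>P. last c < w}" "{w\<in>P. last c < w} \<noteq> {}" using assms(1) by auto
    then obtain y where y: "y \<in> P" "last c < y" "\<And>b. b \<in> P \<Longrightarrow> last c < b \<Longrightarrow> b \<le> y \<Longrightarrow> b = y"
      using finite_has_minimal by (metis (no_types, lifting) mem_Collect_eq)
    then have "cov P (last c) y"
      using sat_chain_last_mem[OF less.prems] unfolding cov_def
      by (metis order.strict_trans order_less_imp_le order_less_irrefl)
    then have s: "sat_chain P z (c @ [y])" using sat_chain_snoc_iff[OF less.prems] by blast
    have "distinct (c @ [y])" "set (c @ [y]) \<subseteq> P"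
      using s cover_chain_distinct unfolding sat_chain_def cover_chain_def by blast+
    then have "length (c @ [y]) \<le> card P"
      using distinct_card[of "c @ [y]"] card_mono[OF assms(1)] by metis
    then obtain m where m: "max_chain P z m" "take (length (c @ [y])) m = c @ [y]"
      using less.hyps[OF _ s] by fastforce
    then have "take (length c) m = c" by (metis append_eq_conv_conj take_take min.absorb1 le_add1 length_append)
    then show ?thesis using m(1) by blast
  qed (use less.prems in \<open>auto simp: max_chain_def\<close>)
qed

lemma ext_chain:
  assumes "finite P" and "sat_chain P z c"
  shows "max_chain P z (ext_chain P z c)" and "take (length c) (ext_chain P z c) = c"
  using someI_ex[OF sat_chain_extends_to_max_chain[OF assms]] unfolding ext_chain_def by auto

lemma length_ext_chain_ge: "finite P \<Longrightarrow> sat_chain P z c \<Longrightarrow> length c \<le> length (ext_chain P z c)"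
  by (metis ext_chain(2) length_take min.absorb_iff2 min.commute)

lemma length_word: "length (word P z lab c) = length c - 1"
  by (simp add: word_def)

section \<open>Quadratic exchanges on a CW-labeled poset\<close>

locale CW_labeled =
  fixes P :: "'a::order set" and z :: 'a and lab :: "'a list \<Rightarrow> nat \<Rightarrow> 'l::order"
  assumes finite_P: "finite P"
    and CW: "CW_labeling P z lab"
begin

lemma C_labeling: "C_labeling P z lab"
  using CW unfolding CW_labeling_def CR_labeling_def by blast

lemma rank_two_switching: "rank_two_switching P z lab"
  using CW unfolding CW_labeling_def by blast

lemma lab_eq_if_take_eq:
  assumes "max_chain P z m" "max_chain P z m'" "take k m = take k m'" "i < k - 1"
  shows "lab m i = lab m' i"
proof -
  have "take (Suc (k - 1)) m = take (Suc (k - 1)) m'" using assms(3,4) by simp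
  then show ?thesis using C_labeling assms unfolding C_labeling_def by blast
qed

lemma word_eq_map_lab:
  assumes c: "sat_chain P z c" and m: "max_chain P z m" "take (length c) m = c"
  shows "word P z lab c = map (lab m) [0..<length c - 1]"
  unfolding word_def
proof (rule map_cong[OF refl])
  fix i assume "i \<in> set [0..<length c - 1]"
  then show "lab (ext_chain P z c) i = lab m i"
    using lab_eq_if_take_eq[of "ext_chain P z c" m "length c" i] ext_chain[OF finite_P c] m by simp
qed

lemma word_snoc:
  assumes cy: "sat_chain P z (c @ [y])" and c: "sat_chain P z c"
  shows "word P z lab (c @ [y]) = word P z lab c @ [ext_label P z lab c y]"
proof -
  let ?m = "ext_chain P z (c @ [y])"
  have m: "max_chain P z ?m" "take (Suc (length c)) ?m = c @ [y]"
    using ext_chain[OF finite_P cy] by auto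
  have "take (length c) ?m = take (length c) (take (Suc (length c)) ?m)" by simp
  then have mc: "take (length c) ?m = c" using m(2) by simp
  have "word P z lab (c @ [y]) = map (lab ?m) [0..<length c]"
    using word_eq_map_lab[OF cy m(1)] m(2) by simp
  also have "[0..<length c] = [0..<length c - 1] @ [length c - 1]"
    using sat_chain_nonempty[OF c] by (cases c) auto
  finally show ?thesis
    using word_eq_map_lab[OF c m(1) mc] by (simp add: ext_label_def)
qed

lemma quad_ex_at_ascent:
  assumes c: "sat_chain P z c" and i: "Suc i < length c"
    and asc: "ascent_at lab (ext_chain P z c) i"
  shows "sat_chain P z (quad_ex P z lab i c)" "last (quad_ex P z lab i c) = last c"
    "sort_step (word P z lab c) (word P z lab (quad_ex P z lab i c))"
proof -
  define m where "m = ext_chain P z c"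
  have m: "max_chain P z m" "take (length c) m = c" using ext_chain[OF finite_P c] m_def by auto
  have lm: "length c \<le> length m" using length_ext_chain_ge[OF finite_P c] m_def by simp
  have asc': "ascent_at lab m i" using asc m_def by simp
  define x where "x = (THE x. switch_ok P z lab m i x)"
  have "\<exists>!x. switch_ok P z lab m i x"
    using rank_two_switching m(1) asc' unfolding rank_two_switching_def by blast
  then have sw: "switch_ok P z lab m i x" unfolding x_def by (rule theI')
  have q: "quad_ex P z lab i c = c[i := x]"
    unfolding quad_ex_def Let_def using i asc m_def x_def by simp
  define m' where "m' = m[i := x]"
  have m': "max_chain P z m'" using sw m'_def switch_ok_def by blast
  have tm': "take (length c) m' = c[i := x]" using m(2) m'_def by (simp add: take_update_swap)
  have c': "sat_chain P z (c[i := x])"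
    using sat_chain_take[of P z m' "length c"] m' tm' sat_chain_nonempty[OF c]
    by (simp add: max_chain_def)
  have i1: "1 \<le> i" and lt: "lab m (i - 1) < lab m i" using asc' ascent_at_def by blast+
  have w: "word P z lab c = map (lab m) [0..<length c - 1]" by (rule word_eq_map_lab[OF c m])
  have w': "word P z lab (c[i := x]) = map (lab m') [0..<length c - 1]"
    using word_eq_map_lab[OF c' m'] tm' by simp
  have labs: "lab m' (i - 1) = lab m i" "lab m' i = lab m (i - 1)"
    "\<And>j. Suc j < length m \<Longrightarrow> j \<noteq> i - 1 \<Longrightarrow> j \<noteq> i \<Longrightarrow> lab m' j = lab m j"
    using sw unfolding switch_ok_def m'_def by auto
  have "word P z lab (c[i := x]) = swap_adj (i - 1) (word P z lab c)"
  proof (rule nth_equalityI)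
    fix j assume "j < length (word P z lab (c[i := x]))"
    then have "j < length c - 1" by (simp add: length_word)
    then show "word P z lab (c[i := x]) ! j = swap_adj (i - 1) (word P z lab c) ! j"
      using i i1 lm labs unfolding w w' swap_adj_def by (auto simp: nth_list_update)
  qed (simp add: length_word swap_adj_def)
  then have "sort_step (word P z lab c) (word P z lab (c[i := x]))"
    unfolding sort_step_iff_swap_adj using i i1 w lt
    by (intro exI[of _ "i - 1"]) (simp add: length_word)
  moreover have "last (c[i := x]) = last c"
    using i sat_chain_nonempty[OF c] by (subst last_list_update) auto
  ultimately show "sat_chain P z (quad_ex P z lab i c)" "last (quad_ex P z lab i c) = last c"
    "sort_step (word P z lab c) (word P z lab (quad_ex P z lab i c))"
    using q c' by simp_all
qed

lemma sort_steps_quad_ex: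
  assumes "sat_chain P z c"
  shows "sort_step\<^sup>*\<^sup>* (word P z lab c) (word P z lab (quad_ex P z lab i c))"
proof (cases "Suc i < length c \<and> ascent_at lab (ext_chain P z c) i")
  case True then show ?thesis using quad_ex_at_ascent[OF assms] by blast
next
  case False then show ?thesis unfolding quad_ex_def Let_def by auto
qed

text \<open>The rank two switching property requires the new element to depend only on the chain
  up to rank \<open>i + 1\<close>, so an exchange is unaffected by what lies above.\<close>

lemma quad_ex_snoc:
  assumes cy: "sat_chain P z (c @ [y])" and c: "sat_chain P z c" and i: "Suc i < length c"
  shows "quad_ex P z lab i (c @ [y]) = quad_ex P z lab i c @ [y]"
proof -
  define m1 m2 where "m1 = ext_chain P z c" and "m2 = ext_chain P z (c @ [y])"
  have m1: "max_chain P z m1" "take (length c) m1 = c" using ext_chain[OF finite_P c] m1_def by auto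
  have m2: "max_chain P z m2" "take (Suc (length c)) m2 = c @ [y]"
    using ext_chain[OF finite_P cy] m2_def by auto
  have "take (length c) m2 = take (length c) (take (Suc (length c)) m2)" by simp
  then have tk: "take (length c) m1 = take (length c) m2" using m1(2) m2(2) by simp
  have l1: "length c \<le> length m1" and l2: "Suc (length c) \<le> length m2"
    using length_ext_chain_ge[OF finite_P c] length_ext_chain_ge[OF finite_P cy] m1_def m2_def by auto
  have "lab m1 j = lab m2 j" if "j < length c - 1" for j
    using lab_eq_if_take_eq[OF m1(1) m2(1) tk that] .
  then have "lab m1 i = lab m2 i" "lab m1 (i - 1) = lab m2 (i - 1)" using i by auto
  then have asc: "ascent_at lab m1 i \<longleftrightarrow> ascent_at lab m2 i"
    unfolding ascent_at_def using i l1 l2 by auto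
  show ?thesis
  proof (cases "ascent_at lab m1 i")
    case True
    have "take (i + 2) m2 = take (i + 2) m1"
      using tk i by (metis add_2_eq_Suc' Suc_leI min.absorb1 take_take)
    then have "(THE x. switch_ok P z lab m2 i x) = (THE x. switch_ok P z lab m1 i x)"
      using rank_two_switching m1(1) True m2(1) unfolding rank_two_switching_def by blast
    then show ?thesis
      unfolding quad_ex_def Let_def m1_def[symmetric] m2_def[symmetric]
      using True asc i by (simp add: list_update_append)
  next
    case False
    then show ?thesis
      unfolding quad_ex_def Let_def m1_def[symmetric] m2_def[symmetric] using asc by simp
  qed
qed

lemma quad_step_sortw_eq: "quad_step P z lab c d \<Longrightarrow> sortw (word P z lab c) = sortw (word P z lab d)"
  unfolding quad_step_def using sortw_sort_steps_eq[OF sort_steps_quad_ex] by metis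

lemma qsim_sortw_eq: "qsim P z lab c d \<Longrightarrow> sortw (word P z lab c) = sortw (word P z lab d)"
proof -
  have "(quad_step P z lab)\<^sup>*\<^sup>* c d \<Longrightarrow> sortw (word P z lab c) = sortw (word P z lab d)"
    by (induction rule: rtranclp_induct) (auto simp: quad_step_sortw_eq)
  then show "qsim P z lab c d \<Longrightarrow> ?thesis" unfolding qsim_def by blast
qed

lemma qsimD: "qsim P z lab c d \<Longrightarrow> sat_chain P z c \<and> sat_chain P z d \<and> last c = last d"
  unfolding qsim_def by blast

lemma qsim_refl: "sat_chain P z c \<Longrightarrow> qsim P z lab c c"
  unfolding qsim_def by simp

lemma qsim_sym: "qsim P z lab c d \<Longrightarrow> qsim P z lab d c"
proof -
  have "symp (quad_step P z lab)" by (rule sympI) (auto simp: quad_step_def)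
  then have "symp (quad_step P z lab)\<^sup>*\<^sup>*" by (rule symp_rtranclp)
  then show "qsim P z lab c d \<Longrightarrow> qsim P z lab d c"
    unfolding qsim_def by (auto dest: sympD)
qed

lemma qsim_trans: "qsim P z lab c d \<Longrightarrow> qsim P z lab d e \<Longrightarrow> qsim P z lab c e"
  unfolding qsim_def by (auto intro: rtranclp_trans)

lemma qsim_class_eq: "qsim P z lab c d \<Longrightarrow> {e. qsim P z lab c e} = {e. qsim P z lab d e}"
  using qsim_sym qsim_trans by blast

lemma quad_step_snoc:
  assumes qs: "quad_step P z lab c d" and cy: "sat_chain P z (c @ [y])"
  shows "quad_step P z lab (c @ [y]) (d @ [y])"
proof -
  have c: "sat_chain P z c" "sat_chain P z d" "last c = last d"
    using qs unfolding quad_step_def by auto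
  have dy: "sat_chain P z (d @ [y])"
    using sat_chain_snoc_iff[OF c(1)] sat_chain_snoc_iff[OF c(2)] cy c(3) by simp
  from qs consider (fwd) i where "Suc i < length c" "d = quad_ex P z lab i c"
    | (bwd) i where "Suc i < length d" "c = quad_ex P z lab i d"
    unfolding quad_step_def by blast
  then show ?thesis
  proof cases
    case fwd
    then have "d @ [y] = quad_ex P z lab i (c @ [y])" using quad_ex_snoc[OF cy c(1)] by simp
    then have "\<exists>i. Suc i < length (c @ [y]) \<and> d @ [y] = quad_ex P z lab i (c @ [y])"
      using fwd(1) by (intro exI[of _ i]) simp
    then show ?thesis unfolding quad_step_def using cy dy by auto
  next
    case bwd
    then have "c @ [y] = quad_ex P z lab i (d @ [y])" using quad_ex_snoc[OF dy c(2)] by simp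
    then have "\<exists>i. Suc i < length (d @ [y]) \<and> c @ [y] = quad_ex P z lab i (d @ [y])"
      using bwd(1) by (intro exI[of _ i]) simp
    then show ?thesis unfolding quad_step_def using cy dy by auto
  qed
qed

lemma qsim_snoc:
  assumes q: "qsim P z lab c d" and cy: "sat_chain P z (c @ [y])"
  shows "qsim P z lab (c @ [y]) (d @ [y])"
proof -
  have "(quad_step P z lab)\<^sup>*\<^sup>* (c @ [y]) (e @ [y]) \<and> sat_chain P z (e @ [y])"
    if "(quad_step P z lab)\<^sup>*\<^sup>* c e" for e
    using that
  proof (induction rule: rtranclp_induct)
    case (step e f)
    then have "quad_step P z lab (e @ [y]) (f @ [y])" using quad_step_snoc by blast
    then show ?case using step quad_step_def by (meson rtranclp.rtrancl_into_rtrancl)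
  qed (use cy in simp)
  then show ?thesis using q cy unfolding qsim_def by auto
qed

text \<open>Exchanging at an ascent performs a sorting step on the word, so it terminates.\<close>

lemma qsim_ascent_free_exists:
  "sat_chain P z c \<Longrightarrow> \<exists>d. qsim P z lab c d \<and> ascent_free (word P z lab d)"
proof (induction c rule: measure_induct_rule[of "\<lambda>c. inversions (word P z lab c)"])
  case (less c)
  show ?case
  proof (cases "ascent_free (word P z lab c)")
    case True then show ?thesis using qsim_refl[OF less.prems] by blast
  next
    case False
    then obtain j where j: "Suc j < length (word P z lab c)"
      "word P z lab c ! j < word P z lab c ! Suc j"
      unfolding ascent_free_def by blast
    have i: "Suc (Suc j) < length c" using j(1) by (simp add: length_word)
    have "ascent_at lab (ext_chain P z c) (Suc j)"
      unfolding ascent_at_def using j i length_ext_chain_ge[OF finite_P less.prems]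
      by (simp add: word_def)
    note c' = quad_ex_at_ascent[OF less.prems i this]
    then have "qsim P z lab c (quad_ex P z lab (Suc j) c)"
      unfolding qsim_def quad_step_def using less.prems i by auto
    moreover obtain d where "qsim P z lab (quad_ex P z lab (Suc j) c) d" "ascent_free (word P z lab d)"
      using less.IH[OF inversions_sort_step_less[OF c'(3)] c'(1)] by blast
    ultimately show ?thesis using qsim_trans by blast
  qed
qed

text \<open>This is the CW condition for the rooted interval \<open>[z, y]\<close> with the trivial root \<open>[z]\<close>.\<close>

lemma sat_chain_eq_if_ascent_free_word_eq:
  assumes c: "sat_chain P z c" and d: "sat_chain P z d" and l: "last c = last d"
    and w: "word P z lab c = word P z lab d" and af: "ascent_free (word P z lab c)"
  shows "c = d"
proof (rule ccontr)
  assume "c \<noteq> d"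
  have z: "sat_chain P z [z]" "z \<le> last c"
    using c cover_chain_le[of P c 0 "length c - 1"] sat_chain_nonempty[OF c]
    unfolding sat_chain_def cover_chain_def by (auto simp: hd_conv_nth last_conv_nth)
  have rw: "rword P z lab [z] e = word P z lab e" if "sat_chain P z e" for e
    using that unfolding sat_chain_def rword_def cover_chain_def by (cases e) auto
  have "interval_chain P z (last c) c" "interval_chain P z (last c) d"
    using c d l unfolding interval_chain_def sat_chain_def by auto
  then show False
    using CW z sat_chain_last_mem[OF c] rw[OF c] rw[OF d] w af \<open>c \<noteq> d\<close>
    unfolding CW_labeling_def by (metis last_ConsL)
qed

lemma qsim_ascent_free_unique:
  assumes q: "qsim P z lab c d" and "ascent_free (word P z lab c)" "ascent_free (word P z lab d)"
  shows "c = d"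
  using sat_chain_eq_if_ascent_free_word_eq qsimD[OF q] qsim_sortw_eq[OF q] sortw_ascent_free assms
  by metis

lemma Rchain_eq:
  assumes "sat_chain P z c" "ascent_free (word P z lab c)"
  shows "Rchain P z lab (last c) (word P z lab c) = c"
  unfolding Rchain_def
  by (rule the_equality) (use assms sat_chain_eq_if_ascent_free_word_eq in auto)

lemma Rchain:
  assumes "a \<in> Rset P z lab"
  shows "sat_chain P z (Rchain P z lab (fst a) (snd a))"
    "last (Rchain P z lab (fst a) (snd a)) = fst a"
    "word P z lab (Rchain P z lab (fst a) (snd a)) = snd a"
    "ascent_free (snd a)"
  using assms Rchain_eq unfolding Rset_def by auto

definition af_rep :: "'a list \<Rightarrow> 'a list" where
  "af_rep c = (SOME d. qsim P z lab c d \<and> ascent_free (word P z lab d))"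

definition R_of_chain :: "'a list \<Rightarrow> 'a \<times> 'l list" where
  "R_of_chain c = (last c, word P z lab (af_rep c))"

definition Q_class :: "'a \<times> 'l list \<Rightarrow> 'a list set" where
  "Q_class a = {d. qsim P z lab (Rchain P z lab (fst a) (snd a)) d}"

lemma af_rep: "sat_chain P z c \<Longrightarrow> qsim P z lab c (af_rep c) \<and> ascent_free (word P z lab (af_rep c))"
  unfolding af_rep_def using qsim_ascent_free_exists by (rule someI_ex)

lemma R_of_chain:
  assumes c: "sat_chain P z c"
  shows "R_of_chain c \<in> Rset P z lab"
    and "Rchain P z lab (fst (R_of_chain c)) (snd (R_of_chain c)) = af_rep c"
    and "Q_class (R_of_chain c) = {d. qsim P z lab c d}"
proof -
  have r: "qsim P z lab c (af_rep c)" "ascent_free (word P z lab (af_rep c))" using af_rep[OF c] by auto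
  have s: "sat_chain P z (af_rep c)" "last (af_rep c) = last c" using qsimD[OF r(1)] by auto
  show "R_of_chain c \<in> Rset P z lab" unfolding Rset_def R_of_chain_def using s r by auto
  show rc: "Rchain P z lab (fst (R_of_chain c)) (snd (R_of_chain c)) = af_rep c"
    unfolding R_of_chain_def using Rchain_eq[OF s(1) r(2)] s(2) by simp
  show "Q_class (R_of_chain c) = {d. qsim P z lab c d}"
    unfolding Q_class_def rc using qsim_class_eq[OF r(1)] by simp
qed

lemma inj_on_Q_class: "inj_on Q_class (Rset P z lab)"
proof (rule inj_onI)
  fix a b assume a: "a \<in> Rset P z lab" and b: "b \<in> Rset P z lab" and e: "Q_class a = Q_class b"
  let ?ra = "Rchain P z lab (fst a) (snd a)" and ?rb = "Rchain P z lab (fst b) (snd b)"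
  have "?ra \<in> Q_class b" using e qsim_refl[OF Rchain(1)[OF a]] unfolding Q_class_def by blast
  then have "?rb = ?ra"
    using qsim_ascent_free_unique Rchain[OF a] Rchain[OF b] unfolding Q_class_def by simp
  then show "a = b" using Rchain(2,3)[OF a] Rchain(2,3)[OF b] by (metis prod.collapse)
qed

lemma Q_class_image: "Q_class ` Rset P z lab = Qset P z lab"
proof
  show "Q_class ` Rset P z lab \<subseteq> Qset P z lab"
    unfolding Qset_def Q_class_def using Rchain(1) by auto
  show "Qset P z lab \<subseteq> Q_class ` Rset P z lab"
    unfolding Qset_def using R_of_chain by (auto intro!: image_eqI)
qed

lemma Qset_memD: "X \<in> Qset P z lab \<Longrightarrow> c \<in> X \<Longrightarrow> sat_chain P z c \<and> X = {d. qsim P z lab c d}"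
  unfolding Qset_def using qsim_class_eq qsimD by auto

lemma inv_Q_class: "sat_chain P z c \<Longrightarrow> inv_into (Rset P z lab) Q_class {d. qsim P z lab c d} = R_of_chain c"
  using inv_into_f_eq[OF inj_on_Q_class R_of_chain(1,3)] .

lemma word_eq_sortw_snoc:
  assumes ry: "sat_chain P z (r @ [y])" and r: "sat_chain P z r"
    and q: "qsim P z lab (r @ [y]) d" and af: "ascent_free (word P z lab d)"
  shows "word P z lab d = sortw (word P z lab r @ [ext_label P z lab r y])"
  using qsim_sortw_eq[OF q] sortw_ascent_free[OF af] word_snoc[OF ry r] by simp

lemma Rcov_R_of_chain_snoc:
  assumes c: "sat_chain P z c" and cy: "sat_chain P z (c @ [y])"
  shows "Rcov P z lab (R_of_chain c) (R_of_chain (c @ [y]))"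
proof -
  define r where "r = af_rep c"
  have r: "qsim P z lab c r" "ascent_free (word P z lab r)" using af_rep[OF c] r_def by auto
  have s: "sat_chain P z r" "last r = last c" using qsimD[OF r(1)] by auto
  have cv: "cov P (last c) y" using sat_chain_snoc_iff[OF c] cy by simp
  have ry: "sat_chain P z (r @ [y])" using sat_chain_snoc_iff[OF s(1)] cv s(2) by simp
  have "qsim P z lab (r @ [y]) (af_rep (c @ [y]))"
    using qsim_trans[OF qsim_snoc[OF qsim_sym[OF r(1)] ry] conjunct1[OF af_rep[OF cy]]] .
  then have "word P z lab (af_rep (c @ [y])) = sortw (word P z lab r @ [ext_label P z lab r y])"
    using word_eq_sortw_snoc[OF ry s(1)] af_rep[OF cy] by blast
  then show ?thesis
    unfolding Rcov_def
    using R_of_chain(1,2)[OF c] R_of_chain(1)[OF cy] cv r_def by (simp add: R_of_chain_def)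
qed

lemma Rle_trans: "Rle P z lab a b \<Longrightarrow> Rle P z lab b c \<Longrightarrow> Rle P z lab a c"
  unfolding Rle_def by (meson rtranclp_trans)

lemma Rle_R_of_chain_append:
  "sat_chain P z (c @ e) \<Longrightarrow> sat_chain P z c \<Longrightarrow> Rle P z lab (R_of_chain c) (R_of_chain (c @ e))"
proof (induction e rule: rev_induct)
  case Nil
  then show ?case unfolding Rle_def using R_of_chain(1) by simp
next
  case (snoc y e)
  have ce: "sat_chain P z (c @ e)"
    using sat_chain_take[OF snoc.prems(1), of "length (c @ e)"] sat_chain_nonempty[OF snoc.prems(2)]
    by simp
  have "Rcov P z lab (R_of_chain (c @ e)) (R_of_chain ((c @ e) @ [y]))"
    using Rcov_R_of_chain_snoc[OF ce] snoc.prems(1) by simp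
  then have "Rle P z lab (R_of_chain (c @ e)) (R_of_chain (c @ e @ [y]))"
    unfolding Rle_def using R_of_chain(1) ce snoc.prems(1) by auto
  then show ?case using Rle_trans snoc.IH[OF ce snoc.prems(2)] by blast
qed

text \<open>Containment of saturated chains from \<open>z\<close> is the prefix relation, i.e. a sequence of covers.\<close>

lemma Qle_imp_Rle:
  assumes "Qle P z lab X Y"
  shows "Rle P z lab (inv_into (Rset P z lab) Q_class X) (inv_into (Rset P z lab) Q_class Y)"
proof -
  have step: "Rle P z lab (inv_into (Rset P z lab) Q_class X) (inv_into (Rset P z lab) Q_class Y)"
    if XY: "X \<in> Qset P z lab" "Y \<in> Qset P z lab" "c \<in> X" "d \<in> Y" and cd: "set c \<subseteq> set d"
    for X Y c d
  proof -
    have c: "sat_chain P z c" "X = {e. qsim P z lab c e}" using Qset_memD XY by blast+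
    have d: "sat_chain P z d" "Y = {e. qsim P z lab d e}" using Qset_memD XY by blast+
    obtain e where "d = c @ e"
      using cover_chain_subset_imp_prefix[of P c d] c(1) d(1) cd unfolding sat_chain_def by auto
    then show ?thesis using Rle_R_of_chain_append[of c e] c d inv_Q_class by simp
  qed
  show ?thesis
    using assms unfolding Qle_def
    by (induction rule: tranclp_induct) (use step Rle_trans in blast)+
qed

lemma Rcov_imp_Qle:
  assumes "Rcov P z lab a b"
  shows "Qle P z lab (Q_class a) (Q_class b)"
proof -
  have a: "a \<in> Rset P z lab" and b: "b \<in> Rset P z lab" and cv: "cov P (fst a) (fst b)"
    and sb: "snd b = sortw (snd a @ [ext_label P z lab (Rchain P z lab (fst a) (snd a)) (fst b)])"
    using assms unfolding Rcov_def by auto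
  define r y where "r = Rchain P z lab (fst a) (snd a)" and "y = fst b"
  have r: "sat_chain P z r" "last r = fst a" "word P z lab r = snd a"
    using Rchain[OF a] r_def by auto
  have ry: "sat_chain P z (r @ [y])" using sat_chain_snoc_iff[OF r(1)] cv r(2) y_def by simp
  define d where "d = af_rep (r @ [y])"
  have d: "qsim P z lab (r @ [y]) d" "ascent_free (word P z lab d)" using af_rep[OF ry] d_def by auto
  have "word P z lab d = snd b" using word_eq_sortw_snoc[OF ry r(1) d] sb r(3) r_def y_def by simp
  moreover have "sat_chain P z d" "last d = y" using qsimD[OF d(1)] by auto
  ultimately have "Q_class b = {x. qsim P z lab d x}"
    unfolding Q_class_def using Rchain_eq[OF _ d(2)] y_def by simp
  then have "r \<in> Q_class a" "r @ [y] \<in> Q_class b"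
    unfolding Q_class_def r_def[symmetric] using qsim_refl[OF r(1)] qsim_sym[OF d(1)] by auto
  moreover have "Q_class a \<in> Qset P z lab" "Q_class b \<in> Qset P z lab" using Q_class_image a b by auto
  moreover have "set r \<subseteq> set (r @ [y])" by auto
  ultimately show ?thesis unfolding Qle_def by (intro tranclp.r_into_trancl) blast
qed

lemma Qle_Q_class_refl: "a \<in> Rset P z lab \<Longrightarrow> Qle P z lab (Q_class a) (Q_class a)"
  using Q_class_image qsim_refl[OF Rchain(1)] unfolding Qle_def Q_class_def
  by (intro tranclp.r_into_trancl) blast

lemma Rle_imp_Qle:
  assumes "Rle P z lab a b"
  shows "Qle P z lab (Q_class a) (Q_class b)"
proof -
  have "(Rcov P z lab)\<^sup>*\<^sup>* a b" "a \<in> Rset P z lab" using assms unfolding Rle_def by auto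
  then show ?thesis
  proof (induction rule: rtranclp_induct)
    case (step b c)
    then show ?case using Rcov_imp_Qle[OF step(2)] unfolding Qle_def by (meson tranclp_trans)
  qed (rule Qle_Q_class_refl)
qed

theorem Q_class_order_iso:
  "bij_betw Q_class (Rset P z lab) (Qset P z lab)"
  "\<And>a b. a \<in> Rset P z lab \<Longrightarrow> b \<in> Rset P z lab \<Longrightarrow> Rle P z lab a b \<longleftrightarrow> Qle P z lab (Q_class a) (Q_class b)"
  using inj_on_Q_class Q_class_image Rle_imp_Qle Qle_imp_Rle inv_into_f_f[OF inj_on_Q_class]
  unfolding bij_betw_def by metis+

end

theorem theorem4p5:
  fixes P :: "'a::order set" and z :: 'a and lab :: "'a list \<Rightarrow> nat \<Rightarrow> 'l::order"
  assumes "fin_graded_bot P z"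
    and "CW_labeling P z lab"
  shows "\<exists>f. bij_betw f (Rset P z lab) (Qset P z lab) \<and>
           (\<forall>a\<in>Rset P z lab. \<forall>b\<in>Rset P z lab. Rle P z lab a b \<longleftrightarrow> Qle P z lab (f a) (f b))"
proof -
  interpret CW_labeled P z lab
    using assms by unfold_locales (simp_all add: fin_graded_bot_def)
  show ?thesis using Q_class_order_iso by blast
qed

end
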